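(* For every integer $m\ge3$ and every $\alpha\in[0,1]$, every deterministic social choice rule that always returns a candidate whose integral domination graph admits a perfect matching has distortion exactly $2+\alpha$ on $\alpha$-decisive metric spaces.
   Context: An election: voters $V=\{1,\dots,n\}$, a fixed finite set $C$ of $m$ candidates, a profile $\sigma$ of linear orders over $C$; $a\succeq_i c$ means $a=c$ or $i$ ranks $a$ above $c$; $\mathrm{top}(i)$ is $i$'s first choice. The integral domination graph $G(a)$ is the bipartite graph with both sides copies of $V$ and edge $(i,j)$ iff $a\succeq_i\mathrm{top}(j)$; for every election some candidate has $G(a)$ admitting a perfect matching. A distance function $d$ on $V\cup C$ is nonnegative, symmetric and satisfies the triangle inequality (co-location allowed); consistent with $\sigma$ if $d(i,c)\le d(i,c')$ whenever $i$ ranks $c$ above $c'$; $\alpha$-decisive if $d(i,\mathrm{top}(i))\le\alpha\,d(i,c)$ for all $i$ and $c\ne\mathrm{top}(i)$. $\mathrm{SC}(c)=\sum_i d(i,c)$. Distortion of a deterministic rule $f$ on $\alpha$-decisive spaces: $\sup_\sigma\sup_d\mathrm{SC}(f(\sigma))/\min_c\mathrm{SC}(c)$ over $\alpha$-decisive consistent $d$. *)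

theory Defs
  imports "HOL-Analysis.Analysis" "HOL-Library.Extended_Real"
begin

(* A ranking (linear order over the candidate type 'c) is a list enumerating every
   candidate exactly once; earlier = more preferred. *)
definition is_ranking :: "'c list \<Rightarrow> bool" where
  "is_ranking p \<longleftrightarrow> distinct p \<and> set p = UNIV"

definition is_profile :: "'c list list \<Rightarrow> bool" where
  "is_profile P \<longleftrightarrow> (\<forall>p\<in>set P. is_ranking p)"

definition ranks_above :: "'c list \<Rightarrow> 'c \<Rightarrow> 'c \<Rightarrow> bool" where
  "ranks_above p a c \<longleftrightarrow> (\<exists>k l. k < l \<and> l < length p \<and> p ! k = a \<and> p ! l = c)"

definition weakly_prefers :: "'c list \<Rightarrow> 'c \<Rightarrow> 'c \<Rightarrow> bool" where
  "weakly_prefers p a c \<longleftrightarrow> a = c \<or> ranks_above p a c"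

definition top_choice :: "'c list \<Rightarrow> 'c" where
  "top_choice p = hd p"

(* The integral domination graph G(a): bipartite, both sides copies of V = {0..<n},
   edge (i,j) iff a \<succeq>_i top(j). *)
definition dom_edge :: "'c list list \<Rightarrow> 'c \<Rightarrow> nat \<Rightarrow> nat \<Rightarrow> bool" where
  "dom_edge P a i j \<longleftrightarrow> weakly_prefers (P ! i) a (top_choice (P ! j))"

definition has_perfect_matching :: "'c list list \<Rightarrow> 'c \<Rightarrow> bool" where
  "has_perfect_matching P a \<longleftrightarrow>
     (\<exists>\<pi>. bij_betw \<pi> {..<length P} {..<length P} \<and> (\<forall>i<length P. dom_edge P a i (\<pi> i)))"

definition points :: "'c list list \<Rightarrow> (nat + 'c) set" where
  "points P = Inl ` {..<length P} \<union> Inr ` UNIV"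

(* distance function: nonnegative, symmetric, triangle inequality (co-location allowed) *)
definition is_distance :: "'c list list \<Rightarrow> ((nat + 'c) \<Rightarrow> (nat + 'c) \<Rightarrow> real) \<Rightarrow> bool" where
  "is_distance P d \<longleftrightarrow>
     (\<forall>x\<in>points P. \<forall>y\<in>points P. d x y \<ge> 0 \<and> d x y = d y x) \<and>
     (\<forall>x\<in>points P. \<forall>y\<in>points P. \<forall>z\<in>points P. d x z \<le> d x y + d y z)"

definition consistent :: "'c list list \<Rightarrow> ((nat + 'c) \<Rightarrow> (nat + 'c) \<Rightarrow> real) \<Rightarrow> bool" where
  "consistent P d \<longleftrightarrow>
     (\<forall>i<length P. \<forall>c c'. ranks_above (P ! i) c c' \<longrightarrow> d (Inl i) (Inr c) \<le> d (Inl i) (Inr c'))"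

definition decisive :: "real \<Rightarrow> 'c list list \<Rightarrow> ((nat + 'c) \<Rightarrow> (nat + 'c) \<Rightarrow> real) \<Rightarrow> bool" where
  "decisive \<alpha> P d \<longleftrightarrow>
     (\<forall>i<length P. \<forall>c. c \<noteq> top_choice (P ! i) \<longrightarrow> d (Inl i) (Inr (top_choice (P ! i))) \<le> \<alpha> * d (Inl i) (Inr c))"

definition SC :: "((nat + 'c) \<Rightarrow> (nat + 'c) \<Rightarrow> real) \<Rightarrow> 'c list list \<Rightarrow> 'c \<Rightarrow> real" where
  "SC d P c = (\<Sum>i<length P. d (Inl i) (Inr c))"

(* Distortion of a deterministic rule f on \<alpha>-decisive spaces, as an extended real.
   Ratio in ereal: x/0 = \<infinity> for x>0 and 0/0 = 0. *)
definition distortion :: "real \<Rightarrow> ('c::finite list list \<Rightarrow> 'c) \<Rightarrow> ereal" where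
  "distortion \<alpha> f =
     (SUP Pd \<in> {(P, d). is_profile P \<and> is_distance P d \<and> consistent P d \<and> decisive \<alpha> P d}.
        ereal (SC (snd Pd) (fst Pd) (f (fst Pd))) / ereal (Min (range (SC (snd Pd) (fst Pd)))))"

end

theory Submission
  imports Defs "HOL-Real_Asymp.Real_Asymp"
begin

text \<open>
  Upper bound: if voter i is matched to voter j in G(a), consistency gives
  d(i,a) \<le> d(i,top j), and the triangle inequality through c and j together with
  \<alpha>-decisiveness of j gives d(i,top j) \<le> d(i,c) + (1+\<alpha>) d(j,c). Summing over a perfect
  matching, which permutes the voters, yields SC(a) \<le> (2+\<alpha>) SC(c).

  Lower bound: place k voters c > a > b at c, k voters b > a > c at distance \<alpha> from b
  and 1 from a and c, and voters a > b > c and a > c > b at a, with a, b, c pairwise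
  1+\<alpha> apart and all other candidates far away. Each of b and c is ranked below every
  top choice by k+1 voters but is the top choice of only k voters, so a is the only
  candidate whose domination graph has a perfect matching, while
  SC(a)/SC(c) = k(2+\<alpha>)/(k+2+2\<alpha>) tends to 2+\<alpha>.
\<close>

lemma ereal_divide_le_of_le_mult:
  fixes x y r :: real
  assumes "0 \<le> x" "0 \<le> y" "0 \<le> r" "x \<le> r * y"
  shows "ereal x / ereal y \<le> ereal r"
proof (cases "y = 0")
  case True
  with assms show ?thesis by simp
next
  case False
  with assms show ?thesis by (simp add: divide_le_eq)
qed

lemma ereal_divide_antimono:
  fixes x y z :: real
  assumes "0 \<le> x" "0 \<le> y" "y \<le> z"
  shows "ereal x / ereal z \<le> ereal x / ereal y"
proof (cases "x = 0 \<or> y = 0")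
  case True
  with assms show ?thesis by auto
next
  case False
  with assms show ?thesis by (simp add: divide_left_mono)
qed

lemma SC_nonneg: "is_distance P d \<Longrightarrow> 0 \<le> SC d P c"
  unfolding SC_def is_distance_def points_def by (auto intro!: sum_nonneg)

lemma obtain_Min_range:
  fixes g :: "'a::finite \<Rightarrow> 'b::linorder"
  obtains x where "Min (range g) = g x"
proof -
  have "Min (range g) \<in> range g" by (rule Min_in) auto
  then show ?thesis using that by blast
qed

lemma dom_edge_distance_le:
  assumes dist: "is_distance P d" and cons: "consistent P d" and dec: "decisive \<alpha> P d"
    and "0 \<le> \<alpha>" and i: "i < length P" and j: "j < length P" and edge: "dom_edge P a i j"
  shows "d (Inl i) (Inr a) \<le> d (Inl i) (Inr c) + (1 + \<alpha>) * d (Inl j) (Inr c)"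
proof -
  define t where "t = top_choice (P ! j)"
  have pts: "Inl i \<in> points P" "Inl j \<in> points P" "\<And>x. Inr x \<in> points P"
    using i j by (auto simp: points_def)
  have nonneg: "0 \<le> (1 + \<alpha>) * d (Inl j) (Inr c)"
    using dist pts \<open>0 \<le> \<alpha>\<close> unfolding is_distance_def by simp
  have "d (Inl i) (Inr a) \<le> d (Inl i) (Inr t)"
    using edge cons i unfolding dom_edge_def weakly_prefers_def consistent_def t_def by auto
  show ?thesis
  proof (cases "t = c")
    case True
    with \<open>d (Inl i) (Inr a) \<le> d (Inl i) (Inr t)\<close> nonneg show ?thesis by simp
  next
    case False
    then have "d (Inl j) (Inr t) \<le> \<alpha> * d (Inl j) (Inr c)"
      using dec j unfolding decisive_def t_def by auto
    moreover have "d (Inl i) (Inr t) \<le> d (Inl i) (Inr c) + d (Inl j) (Inr c) + d (Inl j) (Inr t)"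
      using dist pts unfolding is_distance_def by (smt (verit))
    ultimately show ?thesis
      using \<open>d (Inl i) (Inr a) \<le> d (Inl i) (Inr t)\<close> by (simp add: algebra_simps)
  qed
qed

lemma SC_le_of_has_perfect_matching:
  assumes dist: "is_distance P d" and cons: "consistent P d" and dec: "decisive \<alpha> P d"
    and "0 \<le> \<alpha>" and "has_perfect_matching P a"
  shows "SC d P a \<le> (2 + \<alpha>) * SC d P c"
proof -
  obtain \<pi> where \<pi>: "bij_betw \<pi> {..<length P} {..<length P}"
    and edges: "\<forall>i<length P. dom_edge P a i (\<pi> i)"
    using \<open>has_perfect_matching P a\<close> unfolding has_perfect_matching_def by blast
  have "SC d P a \<le> (\<Sum>i<length P. d (Inl i) (Inr c) + (1 + \<alpha>) * d (Inl (\<pi> i)) (Inr c))"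
    unfolding SC_def
    using dom_edge_distance_le[OF dist cons dec \<open>0 \<le> \<alpha>\<close>] edges bij_betwE[OF \<pi>]
    by (intro sum_mono) blast
  also have "\<dots> = SC d P c + (1 + \<alpha>) * (\<Sum>i<length P. d (Inl (\<pi> i)) (Inr c))"
    by (simp add: SC_def sum.distrib sum_distrib_left)
  also have "(\<Sum>i<length P. d (Inl (\<pi> i)) (Inr c)) = SC d P c"
    unfolding SC_def using sum.reindex_bij_betw[OF \<pi>, of "\<lambda>j. d (Inl j) (Inr c)"] by simp
  finally show ?thesis by (simp add: algebra_simps)
qed

lemma distortion_le:
  fixes f :: "'c::finite list list \<Rightarrow> 'c"
  assumes "0 \<le> \<alpha>" and "\<forall>P. is_profile P \<longrightarrow> has_perfect_matching P (f P)"
  shows "distortion \<alpha> f \<le> ereal (2 + \<alpha>)"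
  unfolding distortion_def
proof (rule SUP_least, clarify, unfold fst_conv snd_conv)
  fix P :: "'c list list" and d
  assume "is_profile P" "is_distance P d" "consistent P d" "decisive \<alpha> P d"
  obtain c where c: "Min (range (SC d P)) = SC d P c" by (rule obtain_Min_range[of "SC d P"])
  have "has_perfect_matching P (f P)" using assms(2) \<open>is_profile P\<close> by blast
  then have "SC d P (f P) \<le> (2 + \<alpha>) * SC d P c"
    by (rule SC_le_of_has_perfect_matching[OF \<open>is_distance P d\<close> \<open>consistent P d\<close>
          \<open>decisive \<alpha> P d\<close> \<open>0 \<le> \<alpha>\<close>])
  then show "ereal (SC d P (f P)) / ereal (Min (range (SC d P))) \<le> ereal (2 + \<alpha>)"
    unfolding c using SC_nonneg[OF \<open>is_distance P d\<close>] \<open>0 \<le> \<alpha>\<close>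
    by (intro ereal_divide_le_of_le_mult) simp_all
qed

lemma ranks_above_Nil [simp]: "\<not> ranks_above [] u v"
  by (simp add: ranks_above_def)

lemma ranks_above_Cons [simp]:
  "ranks_above (x # p) u v \<longleftrightarrow> (u = x \<and> v \<in> set p) \<or> ranks_above p u v"
proof
  assume "ranks_above (x # p) u v"
  then obtain k l where kl: "k < l" "l < Suc (length p)" "(x # p) ! k = u" "(x # p) ! l = v"
    unfolding ranks_above_def by auto
  show "(u = x \<and> v \<in> set p) \<or> ranks_above p u v"
  proof (cases k)
    case 0
    with kl show ?thesis by (cases l) auto
  next
    case (Suc k')
    moreover obtain l' where "l = Suc l'" using kl by (cases l) auto
    ultimately have "ranks_above p u v"
      using kl unfolding ranks_above_def by auto
    then show ?thesis ..
  qed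
next
  assume "(u = x \<and> v \<in> set p) \<or> ranks_above p u v"
  then show "ranks_above (x # p) u v"
  proof
    assume "u = x \<and> v \<in> set p"
    then obtain l where "l < length p" "p ! l = v" by (auto simp: in_set_conv_nth)
    with \<open>u = x \<and> v \<in> set p\<close> show ?thesis
      unfolding ranks_above_def by (intro exI[of _ 0] exI[of _ "Suc l"]) auto
  next
    assume "ranks_above p u v"
    then obtain k l where "k < l" "l < length p" "p ! k = u" "p ! l = v"
      unfolding ranks_above_def by blast
    then show ?thesis
      unfolding ranks_above_def by (intro exI[of _ "Suc k"] exI[of _ "Suc l"]) auto
  qed
qed

lemma ranks_above_imp_mem: "ranks_above p u v \<Longrightarrow> u \<in> set p \<and> v \<in> set p"
  by (induction p) auto

lemma not_ranks_above_append:
  assumes "distinct (xs @ ys)" and "u \<in> set ys" and "t \<in> set xs"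
  shows "\<not> ranks_above (xs @ ys) u t"
  using assms by (induction xs) (auto dest: ranks_above_imp_mem)

lemma not_weakly_prefers_append:
  assumes "distinct (xs @ ys)" and "u \<in> set ys" and "t \<in> set xs"
  shows "\<not> weakly_prefers (xs @ ys) u t"
  using assms not_ranks_above_append unfolding weakly_prefers_def by fastforce

lemma has_perfect_matching_card_le:
  assumes "has_perfect_matching P a" and "S \<subseteq> {..<length P}" and "finite T"
    and "\<And>i j. i \<in> S \<Longrightarrow> j < length P \<Longrightarrow> dom_edge P a i j \<Longrightarrow> j \<in> T"
  shows "card S \<le> card T"
proof -
  obtain \<pi> where \<pi>: "bij_betw \<pi> {..<length P} {..<length P}"
    and edges: "\<forall>i<length P. dom_edge P a i (\<pi> i)"
    using assms(1) unfolding has_perfect_matching_def by blast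
  have "inj_on \<pi> S"
    using \<pi> assms(2) bij_betw_imp_inj_on inj_on_subset by blast
  moreover have "\<pi> ` S \<subseteq> T"
    using edges bij_betwE[OF \<pi>] assms(2,4) by blast
  ultimately show ?thesis using \<open>finite T\<close> by (rule card_inj_on_le)
qed

lemma ranks_above_imp_le_of_sorted:
  assumes "sorted (map g p)" and "ranks_above p u v"
  shows "g u \<le> g v"
  using assms unfolding ranks_above_def sorted_iff_nth_mono by fastforce

lemma consistent_if_sorted:
  assumes "\<forall>i<length P. sorted (map (\<lambda>w. d (Inl i) (Inr w)) (P ! i))"
  shows "consistent P d"
  using assms ranks_above_imp_le_of_sorted unfolding consistent_def by fastforce

lemma is_distance_pullback:
  assumes "\<And>x y. 0 \<le> D x y" "\<And>x y. D x y = D y x" "\<And>x y z. D x z \<le> D x y + D y z"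
  shows "is_distance P (\<lambda>u v. D (loc u) (loc v))"
  using assms unfolding is_distance_def by blast

datatype site = Site_a | Site_b | Site_c | Site_mid | Site_far

definition site_dist :: "real \<Rightarrow> site \<Rightarrow> site \<Rightarrow> real" where
  "site_dist \<alpha> u v =
     (if u = v then 0
      else if u = Site_far \<or> v = Site_far then 3
      else if (u = Site_b \<and> v = Site_mid) \<or> (u = Site_mid \<and> v = Site_b) then \<alpha>
      else if u = Site_mid \<or> v = Site_mid then 1
      else 1 + \<alpha>)"

lemma site_dist_nonneg: "0 \<le> \<alpha> \<Longrightarrow> 0 \<le> site_dist \<alpha> u v"
  by (simp add: site_dist_def)

lemma site_dist_sym: "site_dist \<alpha> u v = site_dist \<alpha> v u"
  by (auto simp: site_dist_def)

text \<open>The detour a, mid, c of length 2 is where \<open>\<alpha> \<le> 1\<close> is needed.\<close>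

lemma site_dist_triangle:
  "0 \<le> \<alpha> \<Longrightarrow> \<alpha> \<le> 1 \<Longrightarrow> site_dist \<alpha> u w \<le> site_dist \<alpha> u v + site_dist \<alpha> v w"
  by (cases u; cases v; cases w) (simp_all add: site_dist_def)

locale tight_instance =
  fixes a b c :: "'c::finite" and rest :: "'c list" and k :: nat and \<alpha> :: real
  assumes ranking: "is_ranking (a # b # c # rest)"
    and alpha_nonneg: "0 \<le> \<alpha>" and alpha_le_one: "\<alpha> \<le> 1"
begin

definition ballot :: "nat \<Rightarrow> 'c list" where
  "ballot i = (if i < k then [c, a, b] else if i < 2 * k then [b, a, c]
     else if i = 2 * k then [a, b, c] else [a, c, b]) @ rest"

definition profile :: "'c list list" where
  "profile = map ballot [0..<2 * k + 2]"

definition voter_site :: "nat \<Rightarrow> site" where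
  "voter_site i = (if i < k then Site_c else if i < 2 * k then Site_mid else Site_a)"

definition cand_site :: "'c \<Rightarrow> site" where
  "cand_site w = (if w = a then Site_a else if w = b then Site_b else if w = c then Site_c
     else Site_far)"

definition distance :: "nat + 'c \<Rightarrow> nat + 'c \<Rightarrow> real" where
  "distance u v = site_dist \<alpha> (case_sum voter_site cand_site u) (case_sum voter_site cand_site v)"

lemma distinct_candidates:
  "a \<noteq> b" "a \<noteq> c" "b \<noteq> c" "a \<notin> set rest" "b \<notin> set rest" "c \<notin> set rest" "distinct rest"
  and mem_rest_iff: "w \<in> set rest \<longleftrightarrow> w \<notin> {a, b, c}"
  using ranking unfolding is_ranking_def by auto

lemma cand_site_rest: "w \<in> set rest \<Longrightarrow> cand_site w = Site_far"
  using distinct_candidates by (auto simp: cand_site_def)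

lemma voter_cases:
  assumes "i < 2 * k + 2"
  obtains "ballot i = c # a # b # rest" "voter_site i = Site_c"
  | "ballot i = b # a # c # rest" "voter_site i = Site_mid"
  | "ballot i = a # b # c # rest" "voter_site i = Site_a"
  | "ballot i = a # c # b # rest" "voter_site i = Site_a"
proof -
  consider "i < k" | "k \<le> i" "i < 2 * k" | "i = 2 * k" | "i = 2 * k + 1"
    using assms by linarith
  then show thesis
    by cases (rule that; simp add: ballot_def voter_site_def)+
qed

lemma length_profile [simp]: "length profile = 2 * k + 2"
  by (simp add: profile_def)

lemma nth_profile [simp]: "i < 2 * k + 2 \<Longrightarrow> profile ! i = ballot i"
  by (simp add: profile_def del: upt_Suc)

lemma top_choice_ballot:
  "top_choice (ballot i) = (if i < k then c else if i < 2 * k then b else a)"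
  by (simp add: ballot_def top_choice_def)

lemma distance_voter_cand [simp]:
  "distance (Inl i) (Inr w) = site_dist \<alpha> (voter_site i) (cand_site w)"
  by (simp add: distance_def)

lemma is_profile_profile: "is_profile profile"
  using ranking unfolding is_profile_def profile_def is_ranking_def ballot_def by auto

lemma is_distance_distance: "is_distance profile distance"
  unfolding distance_def using alpha_nonneg alpha_le_one
  by (intro is_distance_pullback site_dist_nonneg site_dist_sym site_dist_triangle)

lemma map_site_dist_rest:
  "s \<noteq> Site_far \<Longrightarrow> map (\<lambda>w. site_dist \<alpha> s (cand_site w)) rest = replicate (length rest) 3"
  using cand_site_rest by (auto simp: site_dist_def intro: replicate_eqI)

lemma consistent_distance: "consistent profile distance"
proof (rule consistent_if_sorted, intro allI impI)
  fix i assume "i < length profile"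
  then have i: "i < 2 * k + 2" by simp
  show "sorted (map (\<lambda>w. distance (Inl i) (Inr w)) (profile ! i))"
    unfolding nth_profile[OF i] using distinct_candidates alpha_nonneg alpha_le_one
    by (cases rule: voter_cases[OF i])
      (simp_all add: map_site_dist_rest sorted_append, simp_all add: cand_site_def site_dist_def)
qed

lemma decisive_distance: "decisive \<alpha> profile distance"
  unfolding decisive_def
proof (intro allI impI)
  fix i w assume "i < length profile" "w \<noteq> top_choice (profile ! i)"
  then have i: "i < 2 * k + 2" by simp
  with \<open>w \<noteq> top_choice (profile ! i)\<close>
  show "distance (Inl i) (Inr (top_choice (profile ! i))) \<le> \<alpha> * distance (Inl i) (Inr w)"
    unfolding nth_profile[OF i] using distinct_candidates alpha_nonneg
    by (cases rule: voter_cases[OF i])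
      (simp_all add: top_choice_def cand_site_def site_dist_def)
qed

lemma has_perfect_matching_profile_imp_eq_a:
  assumes "has_perfect_matching profile w"
  shows "w = a"
proof -
  have edge: "weakly_prefers (ballot i) w (top_choice (ballot j))"
    if "i < 2 * k + 2" "j < length profile" "dom_edge profile w i j" for i j
    using that by (simp add: dom_edge_def)
  have top: "top_choice (ballot j) \<in> {a, b, c}" for j
    by (simp add: top_choice_ballot)
  consider "w = a" | "w = b" | "w = c" | "w \<in> set rest"
    using mem_rest_iff by blast
  then show ?thesis
  proof cases
    case 2
    have "card (insert (2 * k + 1) {..<k}) \<le> card {k..<2 * k}"
    proof (rule has_perfect_matching_card_le[OF assms])
      fix i j assume "i \<in> insert (2 * k + 1) {..<k}" "j < length profile" "dom_edge profile w i j"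
      then have "weakly_prefers ([c, a] @ b # rest) b (top_choice (ballot j))
          \<or> weakly_prefers ([a, c] @ b # rest) b (top_choice (ballot j))"
        using edge[of i j] \<open>w = b\<close> by (auto simp: ballot_def)
      then have "top_choice (ballot j) = b"
        using top[of j] distinct_candidates not_weakly_prefers_append[of "[c, a]" "b # rest" b]
            not_weakly_prefers_append[of "[a, c]" "b # rest" b] by auto
      then show "j \<in> {k..<2 * k}"
        using distinct_candidates by (auto simp: top_choice_ballot split: if_splits)
    qed auto
    then show ?thesis by simp
  next
    case 3
    have "card (insert (2 * k) {k..<2 * k}) \<le> card {..<k}"
    proof (rule has_perfect_matching_card_le[OF assms])
      fix i j assume "i \<in> insert (2 * k) {k..<2 * k}" "j < length profile" "dom_edge profile w i j"
      then have "weakly_prefers ([b, a] @ c # rest) c (top_choice (ballot j))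
          \<or> weakly_prefers ([a, b] @ c # rest) c (top_choice (ballot j))"
        using edge[of i j] \<open>w = c\<close> by (auto simp: ballot_def)
      then have "top_choice (ballot j) = c"
        using top[of j] distinct_candidates not_weakly_prefers_append[of "[b, a]" "c # rest" c]
            not_weakly_prefers_append[of "[a, b]" "c # rest" c] by auto
      then show "j \<in> {..<k}"
        using distinct_candidates by (auto simp: top_choice_ballot split: if_splits)
    qed auto
    then show ?thesis by simp
  next
    case 4
    have "card {2 * k} \<le> card ({} :: nat set)"
    proof (rule has_perfect_matching_card_le[OF assms])
      fix i j assume "i \<in> {2 * k}" "j < length profile" "dom_edge profile w i j"
      then have "weakly_prefers ([a, b, c] @ rest) w (top_choice (ballot j))"
        using edge[of i j] by (simp add: ballot_def)
      then show "j \<in> {}"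
        using top[of j] distinct_candidates not_weakly_prefers_append[of "[a, b, c]" rest w]
          \<open>w \<in> set rest\<close> by auto
    qed auto
    then show ?thesis by simp
  qed
qed

lemma sum_profile_blocks:
  "(\<Sum>i<2 * k + 2. g i) = (\<Sum>i<k. g i) + (\<Sum>i\<in>{k..<2 * k}. g i) + g (2 * k) + (g (2 * k + 1) :: real)"
proof -
  have "(\<Sum>i<2 * k. g i) = (\<Sum>i<k. g i) + (\<Sum>i\<in>{k..<2 * k}. g i)"
    using sum.atLeastLessThan_concat[of 0 k "2 * k" g] by (simp add: atLeast0LessThan)
  then show ?thesis by simp
qed

lemma SC_profile_a: "SC distance profile a = real k * (2 + \<alpha>)"
proof -
  have "SC distance profile a = (\<Sum>i<k. 1 + \<alpha>) + (\<Sum>i\<in>{k..<2 * k}. 1) + 0 + 0"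
    unfolding SC_def length_profile distance_voter_cand sum_profile_blocks
    by (intro arg_cong2[where f = "(+)"] sum.cong) (auto simp: voter_site_def cand_site_def site_dist_def)
  then show ?thesis by (simp add: algebra_simps)
qed

lemma SC_profile_c: "SC distance profile c = real k + 2 * (1 + \<alpha>)"
proof -
  have "SC distance profile c = (\<Sum>i<k. 0) + (\<Sum>i\<in>{k..<2 * k}. 1) + (1 + \<alpha>) + (1 + \<alpha>)"
    unfolding SC_def length_profile distance_voter_cand sum_profile_blocks
    using distinct_candidates
    by (intro arg_cong2[where f = "(+)"] sum.cong) (auto simp: voter_site_def cand_site_def site_dist_def)
  then show ?thesis by (simp add: algebra_simps)
qed

lemma distortion_ratio_profile_ge:
  "ereal (real k * (2 + \<alpha>) / (real k + 2 * (1 + \<alpha>)))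
     \<le> ereal (SC distance profile a) / ereal (Min (range (SC distance profile)))"
proof -
  have "Min (range (SC distance profile)) \<le> SC distance profile c"
    by (rule Min_le) auto
  moreover obtain w where "Min (range (SC distance profile)) = SC distance profile w"
    by (rule obtain_Min_range)
  ultimately have "ereal (SC distance profile a) / ereal (SC distance profile c)
      \<le> ereal (SC distance profile a) / ereal (Min (range (SC distance profile)))"
    using SC_nonneg[OF is_distance_distance] by (intro ereal_divide_antimono) auto
  moreover have "real k + 2 * (1 + \<alpha>) \<noteq> 0"
    using alpha_nonneg by (simp add: add_nonneg_pos)
  ultimately show ?thesis
    by (simp add: SC_profile_a SC_profile_c)
qed

end

lemma distortion_ge:
  fixes f :: "'c::finite list list \<Rightarrow> 'c"
  assumes "CARD('c) \<ge> 3" and "0 \<le> \<alpha>" and "\<alpha> \<le> 1"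
    and "\<forall>P. is_profile P \<longrightarrow> has_perfect_matching P (f P)"
  shows "ereal (2 + \<alpha>) \<le> distortion \<alpha> f"
proof -
  obtain p :: "'c list" where p: "is_ranking p"
    using finite_distinct_list[of "UNIV :: 'c set"] unfolding is_ranking_def by auto
  then have "3 \<le> length p"
    using assms(1) distinct_card unfolding is_ranking_def by fastforce
  then obtain a b c rest where "p = a # b # c # rest"
    by (auto simp: numeral_3_eq_3 Suc_le_length_iff)
  with p have ranking: "is_ranking (a # b # c # rest)" by simp
  have ratio_le: "ereal (real k * (2 + \<alpha>) / (real k + 2 * (1 + \<alpha>))) \<le> distortion \<alpha> f" for k
  proof -
    interpret tight_instance a b c rest k \<alpha>
      using ranking assms(2,3) by unfold_locales
    have "f profile = a"
      using has_perfect_matching_profile_imp_eq_a assms(4) is_profile_profile by blast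
    have "(profile, distance) \<in> {(P, d). is_profile P \<and> is_distance P d \<and> consistent P d \<and> decisive \<alpha> P d}"
      using is_profile_profile is_distance_distance consistent_distance decisive_distance by blast
    then show ?thesis
      unfolding distortion_def
      by (rule SUP_upper2) (simp only: fst_conv snd_conv \<open>f profile = a\<close> distortion_ratio_profile_ge)
  qed
  have "(\<lambda>k. ereal (real k * (2 + \<alpha>) / (real k + 2 * (1 + \<alpha>)))) \<longlonglongrightarrow> ereal (2 + \<alpha>)"
    using assms(2) by (intro tendsto_ereal) real_asymp
  then show ?thesis
    by (rule LIMSEQ_le_const2) (use ratio_le in blast)
qed

theorem proposition5:
  fixes f :: "'c::finite list list \<Rightarrow> 'c" and \<alpha> :: real
  assumes "CARD('c) \<ge> 3"
    and "0 \<le> \<alpha>" and "\<alpha> \<le> 1"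
    and "\<forall>P. is_profile P \<longrightarrow> has_perfect_matching P (f P)"
  shows "distortion \<alpha> f = ereal (2 + \<alpha>)"
  using distortion_le[OF assms(2,4)] distortion_ge[OF assms] by (rule antisym)

end
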